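(* Let $L$ be an even hyperbolic lattice with fixed positive cone $\mathcal{P}_L$, let $G$ be a subgroup of $\mathrm{O}^+(L)$ of finite index, and let $\mathcal{V}\subset\mathcal{N}_L\cap L^\vee$ satisfy (V1)–(V4) below. Let $f\in\overline{\mathcal{P}}_L\cap L$ be non-zero with $f^2=0$ and let $b=\mathbb{R}_{>0}f$ be the corresponding rational boundary point. Then there exists $\alpha_0>0$ such that for every $0<\alpha\le\alpha_0$ the closed horoball $\mathrm{HB}=\mathrm{HB}_b(\alpha)$ satisfies: (1) for $v\in\mathcal{V}$, the hyperplane $\pi_L((v)^\perp)$ of $\mathcal{H}_L$ intersects $\mathrm{HB}$ if and only if $\langle v,f\rangle=0$ (i.e. $\pi_L((v)^\perp)$ passes through $b$ at infinity); (2) for every $\mathcal{V}^*$-chamber $D$: if $f$ does not lie in the closure $\overline{D}$ of $D$ in $L\otimes\mathbb{R}$, then $\pi_L(D)\cap\mathrm{HB}=\emptyset$, whereas if $f\in\overline{D}$ then $\pi_L(D)\cap\mathrm{HB}=\rho_b^{-1}(\pi_L(D)\cap\partial\mathrm{HB})$. (V1) There is $c>0$ with $-v^2<c$ for all $v\in\mathcal{V}$. (V2) $\mathcal{V}$ is $G$-invariant. (V3) Every $\mathcal{V}^*$-chamber has a finite defining set. (V4) For every $\mathcal{V}^*$-chamber $D$, every non-zero $x\in\overline{D}$ with $x^2=0$ is a positive real multiple of a vector of $L$.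
   Context: $L$ is an even hyperbolic lattice (free $\mathbb{Z}$-module of rank $n>1$ with non-degenerate even symmetric bilinear form $\langle\ ,\ \rangle$ of signature $(1,n-1)$, extended to $L\otimes\mathbb{R}$); $L^\vee$ its dual lattice; $\mathcal{P}_L$ a connected component of $\{x:x^2>0\}$, $\overline{\mathcal{P}}_L$ its closure; $\mathrm{O}^+(L)$ the isometries preserving $\mathcal{P}_L$. $\mathcal{N}_L=\{v: v^2<0\}$, $(v)^\perp=\{x\in\mathcal{P}_L:\langle x,v\rangle=0\}$, $\Sigma_L(\Delta)=\{x:\langle x,v\rangle\ge0\ \forall v\in\Delta\}$. A $\mathcal{V}^*$-chamber is the closure in $\mathcal{P}_L$ of a connected component of $\mathcal{P}_L\setminus\bigcup_{v\in\mathcal{V}}(v)^\perp$; a defining set of such $D$ is $\Delta\subset\mathcal{N}_L\cap L^\vee$ with $D=\Sigma_L(\Delta)\cap\mathcal{P}_L$. $\mathcal{H}_L=\mathcal{P}_L/\mathbb{R}_{>0}$ is the hyperbolic space with projection $\pi_L:\mathcal{P}_L\to\mathcal{H}_L$. For $\alpha>0$ the closed horoball with base $b$ is $\mathrm{HB}_b(\alpha)=\pi_L(\{x\in\mathcal{P}_L:\langle x,f\rangle^2/x^2\le\alpha\})$, with boundary horosphere $\partial\mathrm{HB}_b(\alpha)=\pi_L(\{x\in\mathcal{P}_L:\langle x,f\rangle^2/x^2=\alpha\})$. The natural projection $\rho_b:\mathrm{HB}_b(\alpha)\to\partial\mathrm{HB}_b(\alpha)$ sends a point $p$ to the unique point of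 $\partial\mathrm{HB}_b(\alpha)$ on the geodesic line of $\mathcal{H}_L$ through $p$ that passes through $b$ at infinity (the image under $\pi_L$ of $\mathcal{P}_L\cap(\mathbb{R}x+\mathbb{R}f)$ for $x$ a representative of $p$). *)

theory Defs
  imports "HOL-Analysis.Analysis"
begin

text \<open>The lattice L is modelled as Z^n inside L (x) R = real^'n, with Gram matrix Q
  (integer entries).  bil Q is the bilinear form extended to real^'n.\<close>

definition bil :: "int^'n^'n \<Rightarrow> real^'n \<Rightarrow> real^'n \<Rightarrow> real" where
  "bil Q x y = (\<Sum>i\<in>UNIV. \<Sum>j\<in>UNIV. x$i * of_int (Q$i$j) * y$j)"

definition latL :: "(real^'n) set" where
  "latL = {x. \<forall>i. x$i \<in> \<int>}"

definition dualL :: "int^'n^'n \<Rightarrow> (real^'n) set" where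
  "dualL Q = {x. \<forall>y\<in>latL. bil Q x y \<in> \<int>}"

definition even_hyperbolic :: "int^'n^'n \<Rightarrow> bool" where
  "even_hyperbolic Q \<longleftrightarrow>
     CARD('n) > 1 \<and>
     transpose Q = Q \<and>
     (\<forall>x\<in>latL. \<exists>k::int. bil Q x x = 2 * of_int k) \<and>
     (\<forall>x. (\<forall>y. bil Q x y = 0) \<longrightarrow> x = 0) \<and>
     \<comment> \<open>signature (1, n-1): there is a positive vector, and the orthogonal
        complement of any positive vector is negative definite\<close>
     (\<exists>x. bil Q x x > 0) \<and>
     (\<forall>x y. bil Q x x > 0 \<longrightarrow> bil Q x y = 0 \<longrightarrow> y \<noteq> 0 \<longrightarrow> bil Q y y < 0)"

definition posCone :: "int^'n^'n \<Rightarrow> real^'n \<Rightarrow> (real^'n) set" where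
  "posCone Q h = connected_component_set {x. bil Q x x > 0} h"

definition Oplus :: "int^'n^'n \<Rightarrow> (real^'n) set \<Rightarrow> (real^'n \<Rightarrow> real^'n) set" where
  "Oplus Q P = {g. linear g \<and> g ` latL = latL \<and>
                   (\<forall>x y. bil Q (g x) (g y) = bil Q x y) \<and> g ` P = P}"

definition finite_index_subgroup ::
  "(real^'n \<Rightarrow> real^'n) set \<Rightarrow> (real^'n \<Rightarrow> real^'n) set \<Rightarrow> bool" where
  "finite_index_subgroup G Og \<longleftrightarrow>
     G \<subseteq> Og \<and> id \<in> G \<and> (\<forall>g\<in>G. \<forall>k\<in>G. g \<circ> k \<in> G) \<and>
     (\<forall>g\<in>G. bij g \<and> inv g \<in> G) \<and>
     (\<exists>F. finite F \<and> F \<subseteq> Og \<and> Og = (\<Union>a\<in>F. (\<lambda>g. a \<circ> g) ` G))"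

definition negL :: "int^'n^'n \<Rightarrow> (real^'n) set" where
  "negL Q = {v. bil Q v v < 0}"

definition perp :: "int^'n^'n \<Rightarrow> (real^'n) set \<Rightarrow> real^'n \<Rightarrow> (real^'n) set" where
  "perp Q P v = {x\<in>P. bil Q x v = 0}"

definition SigmaL :: "int^'n^'n \<Rightarrow> (real^'n) set \<Rightarrow> (real^'n) set" where
  "SigmaL Q \<Delta> = {x. \<forall>v\<in>\<Delta>. bil Q x v \<ge> 0}"

definition is_chamber :: "int^'n^'n \<Rightarrow> (real^'n) set \<Rightarrow> (real^'n) set \<Rightarrow> (real^'n) set \<Rightarrow> bool" where
  "is_chamber Q P V D \<longleftrightarrow>
     (let U = P - (\<Union>v\<in>V. perp Q P v) in
      \<exists>x\<in>U. D = P \<inter> closure (connected_component_set U x))"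

definition defining_set :: "int^'n^'n \<Rightarrow> (real^'n) set \<Rightarrow> (real^'n) set \<Rightarrow> (real^'n) set \<Rightarrow> bool" where
  "defining_set Q P D \<Delta> \<longleftrightarrow> \<Delta> \<subseteq> negL Q \<inter> dualL Q \<and> D = SigmaL Q \<Delta> \<inter> P"

text \<open>Hyperbolic space H_L = P / R_{>0}; points are open rays.\<close>
definition projL :: "real^'n \<Rightarrow> (real^'n) set" where
  "projL x = {t *\<^sub>R x | t. t > 0}"

definition horoball :: "int^'n^'n \<Rightarrow> (real^'n) set \<Rightarrow> real^'n \<Rightarrow> real \<Rightarrow> (real^'n) set set" where
  "horoball Q P f \<alpha> = projL ` {x\<in>P. (bil Q x f)\<^sup>2 / bil Q x x \<le> \<alpha>}"

definition horosphere :: "int^'n^'n \<Rightarrow> (real^'n) set \<Rightarrow> real^'n \<Rightarrow> real \<Rightarrow> (real^'n) set set" where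
  "horosphere Q P f \<alpha> = projL ` {x\<in>P. (bil Q x f)\<^sup>2 / bil Q x x = \<alpha>}"

definition geod_to :: "(real^'n) set \<Rightarrow> real^'n \<Rightarrow> (real^'n) set \<Rightarrow> (real^'n) set set" where
  "geod_to P f p = projL ` (P \<inter> span {SOME x. x \<in> p, f})"

definition rho_b :: "int^'n^'n \<Rightarrow> (real^'n) set \<Rightarrow> real^'n \<Rightarrow> real \<Rightarrow> (real^'n) set \<Rightarrow> (real^'n) set" where
  "rho_b Q P f \<alpha> p = (THE q. q \<in> horosphere Q P f \<alpha> \<and> q \<in> geod_to P f p)"

end

theory Submission
  imports Defs
begin

text \<open>
  Let \<open>c\<close> be the constant of (V1). If \<open>z\<^sup>2 > 0\<close> and \<open>\<langle>z,v\<rangle> = 0\<close>, the signature gives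
  \<open>v\<^sup>2 \<langle>z,f\<rangle>\<^sup>2 + \<langle>v,f\<rangle>\<^sup>2 z\<^sup>2 \<le> 0\<close>; for \<open>v \<in> V\<close> with \<open>\<langle>v,f\<rangle> \<noteq> 0\<close> integrality gives
  \<open>\<langle>v,f\<rangle>\<^sup>2 \<ge> 1\<close>, hence \<open>z\<^sup>2 < c \<langle>z,f\<rangle>\<^sup>2\<close>. So the horocone \<open>c \<langle>x,f\<rangle>\<^sup>2 < x\<^sup>2\<close>, which
  contains \<open>HB\<^sub>b(\<alpha>)\<close> for \<open>\<alpha> < 1/c\<close>, meets only the walls through \<open>b\<close>. On a geodesic
  \<open>{m x + \<sigma> f | m > 0}\<close> ending at \<open>b\<close> the horocone is cut out by an inequality linear in
  \<open>(m, \<sigma>)\<close>, so moving a point of a chamber along it inside the horocone crosses no wall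
  and stays in the chamber. Running the point to \<open>b\<close> puts \<open>f\<close> in the closure of every
  chamber meeting the horoball; running it to the horosphere gives the description by \<open>\<rho>\<^sub>b\<close>.
\<close>

lemma bil_add_left: "bil Q (x + y) z = bil Q x z + bil Q y z"
  by (simp add: bil_def algebra_simps sum.distrib)

lemma bil_add_right: "bil Q z (x + y) = bil Q z x + bil Q z y"
  by (simp add: bil_def algebra_simps sum.distrib)

lemma bil_scaleR_left: "bil Q (a *\<^sub>R x) z = a * bil Q x z"
  by (simp add: bil_def sum_distrib_left algebra_simps)

lemma bil_scaleR_right: "bil Q z (a *\<^sub>R x) = a * bil Q z x"
  by (simp add: bil_def sum_distrib_left algebra_simps)

lemma bil_diff_left: "bil Q (x - y) z = bil Q x z - bil Q y z"
  by (simp add: bil_def algebra_simps sum_subtractf)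

lemma bil_diff_right: "bil Q z (x - y) = bil Q z x - bil Q z y"
  by (simp add: bil_def algebra_simps sum_subtractf)

lemma bil_zero_left [simp]: "bil Q 0 z = 0"
  by (simp add: bil_def)

lemma bil_zero_right [simp]: "bil Q z 0 = 0"
  by (simp add: bil_def)

lemmas bil_linear = bil_add_left bil_add_right bil_diff_left bil_diff_right bil_scaleR_left bil_scaleR_right

lemma bil_commute:
  assumes "transpose Q = Q"
  shows "bil Q x y = bil Q y x"
proof -
  have "Q $ j $ i = Q $ i $ j" for i j
  proof -
    have "transpose Q $ i $ j = Q $ i $ j"
      using assms by simp
    then show ?thesis
      by (simp add: transpose_def)
  qed
  then show ?thesis
    unfolding bil_def by (subst sum.swap) (simp add: mult.commute mult.left_commute)
qed

lemma continuous_on_bil [continuous_intros]: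
  "continuous_on S F \<Longrightarrow> continuous_on S G \<Longrightarrow> continuous_on S (\<lambda>x. bil Q (F x) (G x))"
  unfolding bil_def by (intro continuous_intros)

lemma mem_projL: "x \<in> projL x"
  unfolding projL_def by (rule CollectI, rule exI[of _ 1]) simp

lemma projL_eqD: "projL x = projL y \<Longrightarrow> \<exists>t>0. x = t *\<^sub>R y"
  using mem_projL[of x] unfolding projL_def by auto

lemma projL_scaleR:
  assumes "t > 0"
  shows "projL (t *\<^sub>R x) = projL x"
proof (intro set_eqI iffI)
  fix z
  assume "z \<in> projL (t *\<^sub>R x)"
  then obtain u where "u > 0" "z = (u * t) *\<^sub>R x"
    unfolding projL_def by auto
  then show "z \<in> projL x"
    unfolding projL_def using assms by (intro CollectI exI[of _ "u * t"]) auto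
next
  fix z
  assume "z \<in> projL x"
  then obtain u where "u > 0" "z = (u / t) *\<^sub>R (t *\<^sub>R x)"
    unfolding projL_def using assms by auto
  then show "z \<in> projL (t *\<^sub>R x)"
    unfolding projL_def using assms by (intro CollectI exI[of _ "u / t"]) auto
qed

lemma projL_mem_image_iff: "projL x \<in> projL ` S \<longleftrightarrow> (\<exists>t>0. t *\<^sub>R x \<in> S)"
proof
  assume "projL x \<in> projL ` S"
  then obtain d where "d \<in> S" "projL x = projL d"
    by blast
  then show "\<exists>t>0. t *\<^sub>R x \<in> S"
    using projL_eqD[of d x] by auto
next
  assume "\<exists>t>0. t *\<^sub>R x \<in> S"
  then obtain t where "t > 0" "t *\<^sub>R x \<in> S"
    by blast
  then show "projL x \<in> projL ` S"
    using projL_scaleR[of t x] by (blast intro: rev_image_eqI)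
qed

lemma projL_image_iff:
  assumes "\<And>y t. t > 0 \<Longrightarrow> R (t *\<^sub>R y) \<longleftrightarrow> R y"
  shows "projL x \<in> projL ` Collect R \<longleftrightarrow> R x"
proof
  assume "projL x \<in> projL ` Collect R"
  then obtain t where "t > 0" "R (t *\<^sub>R x)"
    unfolding projL_mem_image_iff by auto
  then show "R x"
    using assms by blast
next
  assume "R x"
  then have "1 *\<^sub>R x \<in> Collect R"
    by simp
  then show "projL x \<in> projL ` Collect R"
    unfolding projL_mem_image_iff using zero_less_one by blast
qed

lemma mem_span_pair: "z \<in> span {u, w} \<longleftrightarrow> (\<exists>a b. z = a *\<^sub>R u + b *\<^sub>R w)"
  unfolding span_insert span_singleton by (auto simp: algebra_simps)

lemma geod_to_projL:
  "geod_to P f (projL y) = projL ` {z \<in> P. \<exists>a b. z = a *\<^sub>R y + b *\<^sub>R f}"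
proof -
  obtain t where t: "t > 0" "(SOME x. x \<in> projL y) = t *\<^sub>R y"
    using someI[of "\<lambda>x. x \<in> projL y", OF mem_projL] unfolding projL_def by auto
  have "P \<inter> span {t *\<^sub>R y, f} = {z \<in> P. \<exists>a b. z = a *\<^sub>R y + b *\<^sub>R f}"
  proof (intro set_eqI iffI)
    fix z
    assume "z \<in> P \<inter> span {t *\<^sub>R y, f}"
    then obtain a b where "z \<in> P" "z = a *\<^sub>R (t *\<^sub>R y) + b *\<^sub>R f"
      using mem_span_pair by blast
    then have "z \<in> P" "z = (a * t) *\<^sub>R y + b *\<^sub>R f"
      by simp_all
    then show "z \<in> {z \<in> P. \<exists>a b. z = a *\<^sub>R y + b *\<^sub>R f}"
      by blast
  next
    fix z
    assume "z \<in> {z \<in> P. \<exists>a b. z = a *\<^sub>R y + b *\<^sub>R f}"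
    then obtain a b where "z \<in> P" "z = (a / t) *\<^sub>R (t *\<^sub>R y) + b *\<^sub>R f"
      using t(1) by auto
    then show "z \<in> P \<inter> span {t *\<^sub>R y, f}"
      using mem_span_pair by blast
  qed
  then show ?thesis
    unfolding geod_to_def t(2) by (rule arg_cong)
qed

locale lorentz_cone =
  fixes Q :: "int^'n^'n" and h :: "real^'n"
  assumes symmetric: "transpose Q = Q"
    and orthogonal_of_positive_negative:
      "\<And>x y. bil Q x x > 0 \<Longrightarrow> bil Q x y = 0 \<Longrightarrow> y \<noteq> 0 \<Longrightarrow> bil Q y y < 0"
    and h_positive: "bil Q h h > 0"
begin

abbreviation "P \<equiv> posCone Q h"
abbreviation "B \<equiv> bil Q"

lemma B_commute: "B x y = B y x"
  using bil_commute[OF symmetric] .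

lemma orthogonal_of_positive_nonpos:
  assumes "B x x > 0" "B x y = 0"
  shows "B y y \<le> 0"
proof (cases "y = 0")
  case False
  then show ?thesis
    using orthogonal_of_positive_negative[OF assms] by simp
qed simp

lemma square_pos_of_posCone:
  assumes "x \<in> P"
  shows "B x x > 0"
proof -
  have "x \<in> {x. B x x > 0}"
    using assms unfolding posCone_def by (rule subsetD[OF connected_component_subset])
  then show ?thesis
    by simp
qed

lemma h_in_posCone: "h \<in> P"
  unfolding posCone_def using h_positive by (simp add: connected_component_refl)

lemma bil_nonzero_of_positive:
  assumes "B x x > 0" "B y y > 0"
  shows "B x y \<noteq> 0"
proof
  assume "B x y = 0"
  moreover have "y \<noteq> 0"
    using assms(2) by auto
  ultimately have "B y y < 0"
    using orthogonal_of_positive_negative[OF assms(1)] by blast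
  with assms(2) show False
    by simp
qed

text \<open>\<open>y \<mapsto> \<langle>x,y\<rangle>\<close> does not vanish on the connected set \<open>P\<close> and is positive at \<open>x\<close>.\<close>
lemma posCone_bil_pos:
  assumes "x \<in> P" "y \<in> P"
  shows "B x y > 0"
proof (rule ccontr)
  have xx: "B x x > 0" and nz: "\<And>z. z \<in> P \<Longrightarrow> B x z \<noteq> 0"
    using assms bil_nonzero_of_positive square_pos_of_posCone by auto
  assume "\<not> B x y > 0"
  then have "B x y < 0"
    using nz[OF assms(2)] by simp
  moreover have "connected ((\<lambda>y. B x y) ` P)"
    by (intro connected_continuous_image continuous_intros) (auto simp: posCone_def)
  moreover have "B x x \<in> (\<lambda>y. B x y) ` P" "B x y \<in> (\<lambda>y. B x y) ` P"
    using assms by auto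
  ultimately have "0 \<in> (\<lambda>y. B x y) ` P"
    using xx unfolding connected_iff_interval by (meson less_imp_le)
  then show False
    using nz by auto
qed

lemma closed_segment_subset_posCone:
  assumes p: "p \<in> P" and q: "B q q > 0" and pq: "B p q > 0"
  shows "closed_segment p q \<subseteq> P"
proof -
  have "B z z > 0" if z: "z \<in> closed_segment p q" for z
  proof -
    obtain u where u: "0 \<le> u" "u \<le> 1" "z = (1 - u) *\<^sub>R p + u *\<^sub>R q"
      using z by (auto simp: in_segment)
    have "B z z = (1 - u)^2 * B p p + 2 * ((1 - u) * u) * B p q + u^2 * B q q"
      unfolding u(3) by (simp add: bil_linear B_commute[of q p] power2_eq_square algebra_simps)
    moreover have "(1 - u)^2 * B p p + 2 * ((1 - u) * u) * B p q + u^2 * B q q > 0"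
    proof (cases "u < 1")
      case True
      then show ?thesis
        using u pq q square_pos_of_posCone[OF p]
        by (intro add_pos_nonneg add_nonneg_nonneg) (auto intro!: mult_nonneg_nonneg)
    next
      case False
      then show ?thesis
        using u q by auto
    qed
    ultimately show ?thesis
      by simp
  qed
  then have "closed_segment p q \<subseteq> connected_component_set {z. B z z > 0} p"
    by (intro connected_component_maximal) auto
  also have "\<dots> = P"
    using p unfolding posCone_def by (rule connected_component_eq)
  finally show ?thesis .
qed

lemma posCone_memI: "p \<in> P \<Longrightarrow> B q q > 0 \<Longrightarrow> B p q > 0 \<Longrightarrow> q \<in> P"
  using closed_segment_subset_posCone ends_in_segment by blast

lemma posCone_scaleR_iff:
  assumes "t > 0"
  shows "t *\<^sub>R x \<in> P \<longleftrightarrow> x \<in> P"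
proof -
  have "u *\<^sub>R y \<in> P" if "y \<in> P" "u > 0" for y u
    using posCone_memI[OF that(1)] square_pos_of_posCone[OF that(1)] that(2)
    by (simp add: bil_linear)
  from this[of x t] this[of "t *\<^sub>R x" "1 / t"] assms show ?thesis
    by auto
qed

lemma posCone_orthogonal_exists:
  assumes "B v v < 0"
  shows "\<exists>g\<in>P. B g v = 0"
proof
  define g where "g = (- B v v) *\<^sub>R h + B h v *\<^sub>R v"
  show "B g v = 0"
    unfolding g_def by (simp add: bil_linear)
  have gh: "B g h = - B v v * B h h + (B h v)^2"
    unfolding g_def by (simp add: bil_linear B_commute[of v h] power2_eq_square)
  have "B g h > 0"
    unfolding gh using assms h_positive by (intro add_pos_nonneg) (auto simp: mult_neg_pos)
  moreover have "B g g = - B v v * B g h"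
    unfolding gh unfolding g_def by (simp add: bil_linear B_commute[of v h] power2_eq_square algebra_simps)
  ultimately show "g \<in> P"
    using posCone_memI[OF h_in_posCone, of g] assms B_commute[of h g] by (simp add: mult_neg_pos)
qed

end

locale cusp = lorentz_cone +
  fixes f
  assumes f_in_closure: "f \<in> closure P"
    and f_nonzero: "f \<noteq> 0"
    and f_isotropic: "B f f = 0"
begin

lemma bil_isotropic_nonzero: "B x x > 0 \<Longrightarrow> B x f \<noteq> 0"
  using orthogonal_of_positive_negative[of x f] f_nonzero f_isotropic by auto

lemma posCone_bil_isotropic_pos:
  assumes "x \<in> P"
  shows "B x f > 0"
proof -
  have "closure P \<subseteq> {y. 0 \<le> B x y}"
    using posCone_bil_pos[OF assms]
    by (intro closure_minimal closed_Collect_le continuous_intros) (auto intro: less_imp_le)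
  then show ?thesis
    using f_in_closure bil_isotropic_nonzero[OF square_pos_of_posCone[OF assms]]
    by fastforce
qed

lemma bil_shift_isotropic: "B (a *\<^sub>R x + s *\<^sub>R f) f = a * B x f"
  by (simp add: bil_linear f_isotropic)

lemma bil_shift_square:
  "B (a *\<^sub>R x + s *\<^sub>R f) (a *\<^sub>R x + s *\<^sub>R f) = a * (a * B x x + 2 * s * B x f)"
  by (simp add: bil_linear f_isotropic B_commute[of f x] algebra_simps)

lemma shift_in_posCone:
  assumes "x \<in> P" "a > 0" "B (a *\<^sub>R x + s *\<^sub>R f) (a *\<^sub>R x + s *\<^sub>R f) > 0"
  shows "a *\<^sub>R x + s *\<^sub>R f \<in> P"
proof (rule posCone_memI[OF assms(1) assms(3)])
  have "a * B x x + 2 * s * B x f > 0" and "a * B x x > 0"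
    using assms square_pos_of_posCone[OF assms(1)] by (auto simp: bil_shift_square zero_less_mult_iff)
  then show "B x (a *\<^sub>R x + s *\<^sub>R f) > 0"
    by (simp add: bil_linear)
qed

text \<open>The vector \<open>v + t (z\<^sup>2 f - \<langle>z,f\<rangle> z)\<close>, with \<open>t = \<langle>v,f\<rangle> / \<langle>z,f\<rangle>\<^sup>2\<close>, is orthogonal to \<open>z\<close>;
  its square is \<open>v\<^sup>2 + \<langle>v,f\<rangle>\<^sup>2 z\<^sup>2 / \<langle>z,f\<rangle>\<^sup>2\<close>.\<close>
lemma orthogonal_wall_inequality:
  assumes zz: "B z z > 0" and zv: "B z v = 0"
  shows "B v v * (B z f)^2 + (B v f)^2 * B z z \<le> 0"
proof -
  define k where "k = B z f"
  have k: "k \<noteq> 0"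
    using bil_isotropic_nonzero[OF zz] k_def by simp
  define t where "t = B v f / k^2"
  define u where "u = v + t *\<^sub>R (B z z *\<^sub>R f - k *\<^sub>R z)"
  have "B z u = 0"
    unfolding u_def k_def by (simp add: bil_linear zv algebra_simps)
  then have uu: "B u u \<le> 0"
    using orthogonal_of_positive_nonpos[OF zz] by blast
  have "B u u = B v v + 2 * t * (B z z * B v f) - t^2 * B z z * k^2"
    unfolding u_def
    by (simp add: bil_linear B_commute[of f z] B_commute[of v z] B_commute[of f v] zv
        f_isotropic k_def power2_eq_square algebra_simps)
  also have "\<dots> = B v v + (B v f)^2 * B z z / k^2"
    unfolding t_def using k by (simp add: field_simps power2_eq_square)
  finally have "(B v v + (B v f)^2 * B z z / k^2) * k^2 \<le> 0"
    using uu by (simp add: mult_nonpos_nonneg)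
  moreover have "(B v v + (B v f)^2 * B z z / k^2) * k^2 = B v v * k^2 + (B v f)^2 * B z z"
    using k by (simp add: field_simps)
  ultimately show ?thesis
    unfolding k_def by simp
qed

definition open_horocone where
  "open_horocone c = {x. c * (B x f)^2 < B x x}"

lemma open_horocone_scaleR_iff:
  assumes "t \<noteq> 0"
  shows "t *\<^sub>R x \<in> open_horocone c \<longleftrightarrow> x \<in> open_horocone c"
proof -
  have t2: "t^2 > 0"
    using assms by simp
  have lhs: "c * (B (t *\<^sub>R x) f)^2 = t^2 * (c * (B x f)^2)"
    and rhs: "B (t *\<^sub>R x) (t *\<^sub>R x) = t^2 * B x x"
    by (simp_all add: bil_linear power2_eq_square)
  show ?thesis
    unfolding open_horocone_def mem_Collect_eq lhs rhs mult_less_cancel_left_pos[OF t2] ..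
qed

lemma open_open_horocone: "open (open_horocone c)"
  unfolding open_horocone_def by (intro open_Collect_less continuous_intros)

lemma square_pos_of_open_horocone:
  assumes "c \<ge> 0" "x \<in> open_horocone c"
  shows "B x x > 0"
proof -
  have "0 \<le> c * (B x f)^2"
    using assms(1) by simp
  with assms(2) show ?thesis
    unfolding open_horocone_def by simp
qed

lemma shift_in_open_horocone_iff:
  assumes "m > 0"
  shows "m *\<^sub>R x + \<sigma> *\<^sub>R f \<in> open_horocone c \<longleftrightarrow> c * m * (B x f)^2 < m * B x x + 2 * \<sigma> * B x f"
proof -
  have "c * (m * B x f)^2 = m * (c * m * (B x f)^2)"
    by (simp add: power2_eq_square)
  then show ?thesis
    unfolding open_horocone_def mem_Collect_eq bil_shift_isotropic bil_shift_square
    by (simp only: mult_less_cancel_left_pos[OF assms])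
qed

text \<open>Along a geodesic towards \<open>f\<close> the horocone is cut out by an inequality that is linear in
  the coefficients \<open>(m, \<sigma>)\<close> of \<open>m x + \<sigma> f\<close>.\<close>
lemma closed_segment_shift_in_open_horocone:
  assumes a: "a > 0" and x: "x \<in> open_horocone c" and y: "a *\<^sub>R x + s *\<^sub>R f \<in> open_horocone c"
    and z: "z \<in> closed_segment x (a *\<^sub>R x + s *\<^sub>R f)"
  obtains m \<sigma> where "m > 0" "z = m *\<^sub>R x + \<sigma> *\<^sub>R f" "z \<in> open_horocone c"
proof -
  obtain \<tau> where \<tau>: "0 \<le> \<tau>" "\<tau> \<le> 1" "z = (1 - \<tau>) *\<^sub>R x + \<tau> *\<^sub>R (a *\<^sub>R x + s *\<^sub>R f)"
    using z by (auto simp: in_segment)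
  define m where "m = 1 - \<tau> + \<tau> * a"
  define \<sigma> where "\<sigma> = \<tau> * s"
  define L where "L m' \<sigma>' = c * m' * (B x f)^2 - (m' * B x x + 2 * \<sigma>' * B x f)" for m' \<sigma>'
  have m: "m > 0"
    unfolding m_def using \<tau> a by (cases "\<tau> = 1") (auto intro: add_pos_nonneg)
  have zm: "z = m *\<^sub>R x + \<sigma> *\<^sub>R f"
    unfolding \<tau>(3) m_def \<sigma>_def by (simp add: algebra_simps)
  have "L 1 0 < 0"
    using x shift_in_open_horocone_iff[of 1 x 0] unfolding L_def by simp
  moreover have "L a s < 0"
    using y shift_in_open_horocone_iff[OF a] unfolding L_def by simp
  moreover have "L m \<sigma> = (1 - \<tau>) * L 1 0 + \<tau> * L a s"
    unfolding L_def m_def \<sigma>_def by (simp add: algebra_simps)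
  ultimately have "L m \<sigma> < 0"
    using convex_bound_lt[of "L 1 0" 0 "L a s" "1 - \<tau>" \<tau>] \<tau> by simp
  then have "z \<in> open_horocone c"
    unfolding zm L_def using shift_in_open_horocone_iff[OF m] by simp
  with m zm show thesis
    using that by blast
qed

lemma ratio_scaleR: "t \<noteq> 0 \<Longrightarrow> (B (t *\<^sub>R x) f)^2 / B (t *\<^sub>R x) (t *\<^sub>R x) = (B x f)^2 / B x x"
  by (simp add: bil_linear power2_eq_square)

lemma horoball_projL_iff:
  assumes "x \<in> P"
  shows "projL x \<in> horoball Q P f \<alpha> \<longleftrightarrow> (B x f)^2 \<le> \<alpha> * B x x"
proof -
  have "projL x \<in> horoball Q P f \<alpha> \<longleftrightarrow> (B x f)^2 / B x x \<le> \<alpha>"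
    unfolding horoball_def using assms
    by (subst projL_image_iff) (auto simp: posCone_scaleR_iff ratio_scaleR)
  then show ?thesis
    using square_pos_of_posCone[OF assms] by (simp add: pos_divide_le_eq mult.commute)
qed

lemma horosphere_projL_iff:
  assumes "x \<in> P"
  shows "projL x \<in> horosphere Q P f \<alpha> \<longleftrightarrow> (B x f)^2 = \<alpha> * B x x"
proof -
  have "projL x \<in> horosphere Q P f \<alpha> \<longleftrightarrow> (B x f)^2 / B x x = \<alpha>"
    unfolding horosphere_def using assms
    by (subst projL_image_iff) (auto simp: posCone_scaleR_iff ratio_scaleR)
  then show ?thesis
    using square_pos_of_posCone[OF assms] by (auto simp: field_simps)
qed

lemma horoball_elim:
  assumes "p \<in> horoball Q P f \<alpha>"
  obtains y where "y \<in> P" "p = projL y" "(B y f)^2 \<le> \<alpha> * B y y"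
  using assms horoball_projL_iff unfolding horoball_def by auto

definition horosphere_shift where
  "horosphere_shift \<alpha> y = ((B y f)^2 / \<alpha> - B y y) / (2 * B y f)"

lemma shift_on_horosphere_iff:
  assumes "y \<in> P" "\<alpha> > 0"
  shows "(B (y + b *\<^sub>R f) f)^2 = \<alpha> * B (y + b *\<^sub>R f) (y + b *\<^sub>R f) \<longleftrightarrow> b = horosphere_shift \<alpha> y"
  using bil_shift_isotropic[of 1 y b] bil_shift_square[of 1 y b] assms
    posCone_bil_isotropic_pos[OF assms(1)]
  unfolding horosphere_shift_def by (auto simp: field_simps)

lemma shift_to_horosphere:
  assumes y: "y \<in> P" and \<alpha>: "\<alpha> > 0"
  defines "z \<equiv> y + horosphere_shift \<alpha> y *\<^sub>R f"
  shows "z \<in> P" "(B z f)^2 = \<alpha> * B z z"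
proof -
  show zr: "(B z f)^2 = \<alpha> * B z z"
    unfolding z_def using shift_on_horosphere_iff[OF y \<alpha>] by blast
  moreover have "B z f > 0"
    unfolding z_def using bil_shift_isotropic[of 1 y] posCone_bil_isotropic_pos[OF y] by simp
  ultimately have "B z z > 0"
    using \<alpha> by (metis zero_less_mult_pos zero_less_power)
  then show "z \<in> P"
    unfolding z_def using shift_in_posCone[OF y, of 1] by simp
qed

lemma rho_b_projL:
  assumes y: "y \<in> P" and \<alpha>: "\<alpha> > 0"
  shows "rho_b Q P f \<alpha> (projL y) = projL (y + horosphere_shift \<alpha> y *\<^sub>R f)"
  unfolding rho_b_def
proof (rule the_equality)
  define z where "z = y + horosphere_shift \<alpha> y *\<^sub>R f"
  note z = shift_to_horosphere[OF y \<alpha>, folded z_def]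
  have "z = 1 *\<^sub>R y + horosphere_shift \<alpha> y *\<^sub>R f"
    unfolding z_def by simp
  then have "z \<in> {z \<in> P. \<exists>a b. z = a *\<^sub>R y + b *\<^sub>R f}"
    using z(1) by blast
  then show "projL z \<in> horosphere Q P f \<alpha> \<and> projL z \<in> geod_to P f (projL y)"
    unfolding geod_to_projL using z horosphere_projL_iff by blast
  fix q
  assume "q \<in> horosphere Q P f \<alpha> \<and> q \<in> geod_to P f (projL y)"
  then obtain a b where ab: "a *\<^sub>R y + b *\<^sub>R f \<in> P" "q = projL (a *\<^sub>R y + b *\<^sub>R f)"
    and hs: "(B (a *\<^sub>R y + b *\<^sub>R f) f)^2 = \<alpha> * B (a *\<^sub>R y + b *\<^sub>R f) (a *\<^sub>R y + b *\<^sub>R f)"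
    unfolding geod_to_projL using horosphere_projL_iff by auto
  have "B (a *\<^sub>R y + b *\<^sub>R f) f > 0"
    using posCone_bil_isotropic_pos[OF ab(1)] .
  then have a: "a > 0"
    using posCone_bil_isotropic_pos[OF y] by (simp add: bil_shift_isotropic zero_less_mult_iff)
  define w where "w = y + (b / a) *\<^sub>R f"
  have q: "a *\<^sub>R y + b *\<^sub>R f = a *\<^sub>R w"
    unfolding w_def using a by (simp add: algebra_simps)
  have "a^2 * (B w f)^2 = a^2 * (\<alpha> * B w w)"
    using hs unfolding q by (simp only: bil_scaleR_left bil_scaleR_right) (simp add: power2_eq_square)
  then have "(B w f)^2 = \<alpha> * B w w"
    using a by simp
  then have "b / a = horosphere_shift \<alpha> y"
    using shift_on_horosphere_iff[OF y \<alpha>] unfolding w_def by blast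
  then show "q = projL z"
    unfolding ab(2) q w_def z_def by (simp add: projL_scaleR[OF a])
qed

end

locale cusp_walls = cusp +
  fixes V and c :: real
  assumes f_lattice: "f \<in> latL"
    and walls_dual: "V \<subseteq> negL Q \<inter> dualL Q"
    and c_pos: "c > 0"
    and walls_bounded: "\<And>v. v \<in> V \<Longrightarrow> - B v v < c"
begin

lemma wall_bil_isotropic_square_ge_one:
  assumes "v \<in> V" "B v f \<noteq> 0"
  shows "(B v f)^2 \<ge> 1"
proof -
  have "B v f \<in> \<int>"
    using assms walls_dual f_lattice unfolding dualL_def by auto
  then obtain m :: int where m: "B v f = of_int m"
    by (elim Ints_cases)
  then have "1 \<le> \<bar>B v f\<bar>"
    using assms by simp
  then show ?thesis
    by (metis abs_le_square_iff abs_one one_power2)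
qed

lemma open_horocone_avoids_walls:
  assumes z: "z \<in> open_horocone c" and v: "v \<in> V" and zv: "B z v = 0"
  shows "B v f = 0"
proof (rule ccontr)
  assume vf: "B v f \<noteq> 0"
  have zz: "B z z > 0"
    using square_pos_of_open_horocone[OF less_imp_le[OF c_pos] z] .
  have "B z z \<le> (B v f)^2 * B z z"
    using wall_bil_isotropic_square_ge_one[OF v vf] zz by simp
  also have "\<dots> \<le> - B v v * (B z f)^2"
    using orthogonal_wall_inequality[OF zz zv] by simp
  also have "\<dots> \<le> c * (B z f)^2"
    using mult_right_mono[OF less_imp_le[OF walls_bounded[OF v]] zero_le_power2[of "B z f"]]
    by simp
  finally show False
    using z unfolding open_horocone_def by simp
qed

lemma horoball_subset_open_horocone:
  assumes "x \<in> P" "\<alpha> < 1 / c" "(B x f)^2 \<le> \<alpha> * B x x"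
  shows "x \<in> open_horocone c"
proof -
  have "c * (B x f)^2 \<le> (c * \<alpha>) * B x x"
    using assms(3) c_pos by (simp add: mult_left_mono)
  also have "\<dots> < B x x"
    using assms(2) c_pos square_pos_of_posCone[OF assms(1)] by (simp add: field_simps)
  finally show ?thesis
    unfolding open_horocone_def by simp
qed

definition wall_complement where
  "wall_complement = P - (\<Union>v\<in>V. perp Q P v)"

lemma is_chamber_iff:
  "is_chamber Q P V D \<longleftrightarrow>
     (\<exists>x\<in>wall_complement. D = P \<inter> closure (connected_component_set wall_complement x))"
  unfolding is_chamber_def wall_complement_def Let_def ..

text \<open>Walls through \<open>b\<close> contain the whole geodesic, the others miss the horocone.\<close>
lemma closed_segment_shift_subset_wall_complement:
  assumes x: "x \<in> wall_complement" "x \<in> open_horocone c" and a: "a > 0"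
    and y: "a *\<^sub>R x + s *\<^sub>R f \<in> open_horocone c"
  shows "closed_segment x (a *\<^sub>R x + s *\<^sub>R f) \<subseteq> wall_complement"
proof
  fix z
  assume "z \<in> closed_segment x (a *\<^sub>R x + s *\<^sub>R f)"
  then obtain m \<sigma> where m: "m > 0" and zm: "z = m *\<^sub>R x + \<sigma> *\<^sub>R f" and z: "z \<in> open_horocone c"
    using closed_segment_shift_in_open_horocone[OF a x(2) y] by metis
  have xP: "x \<in> P" and xv: "\<And>v. v \<in> V \<Longrightarrow> B x v \<noteq> 0"
    using x(1) unfolding wall_complement_def perp_def by auto
  have "z \<in> P"
    unfolding zm using shift_in_posCone[OF xP m] square_pos_of_open_horocone[OF _ z] c_pos zm
    by simp
  moreover have "B z v \<noteq> 0" if v: "v \<in> V" for v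
  proof
    assume zv: "B z v = 0"
    then have "B v f = 0"
      using open_horocone_avoids_walls[OF z v] by simp
    then have "B z v = m * B x v"
      unfolding zm by (simp add: bil_linear B_commute[of f v])
    with zv m xv[OF v] show False
      by simp
  qed
  ultimately show "z \<in> wall_complement"
    unfolding wall_complement_def perp_def by auto
qed

lemma component_shift_closed:
  assumes x: "x \<in> connected_component_set wall_complement x1" "x \<in> open_horocone c"
    and a: "a > 0" and y: "a *\<^sub>R x + s *\<^sub>R f \<in> open_horocone c"
  shows "a *\<^sub>R x + s *\<^sub>R f \<in> connected_component_set wall_complement x1"
proof -
  have xW: "x \<in> wall_complement"
    using x(1) connected_component_subset by blast
  have "closed_segment x (a *\<^sub>R x + s *\<^sub>R f) \<subseteq> connected_component_set wall_complement x"
    by (intro connected_component_maximal closed_segment_shift_subset_wall_complement xW x a y)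
      auto
  also have "\<dots> = connected_component_set wall_complement x1"
    using x(1) by (metis connected_component_eq)
  finally show ?thesis
    by auto
qed

lemma chamber_shift_closed:
  assumes D: "is_chamber Q P V D" and x: "x \<in> D" "x \<in> open_horocone c" and a: "a > 0"
    and y: "a *\<^sub>R x + s *\<^sub>R f \<in> open_horocone c"
  shows "a *\<^sub>R x + s *\<^sub>R f \<in> D"
proof -
  obtain x1 where D_eq: "D = P \<inter> closure (connected_component_set wall_complement x1)"
    using D unfolding is_chamber_iff by blast
  define C where "C = connected_component_set wall_complement x1"
  define \<phi> where "\<phi> x' = a *\<^sub>R x' + s *\<^sub>R f" for x'
  define U where "U = open_horocone c \<inter> \<phi> -` open_horocone c"
  have cont: "continuous_on A \<phi>" "isCont \<phi> x'" for A x'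
    unfolding \<phi>_def by (intro continuous_intros)+
  have "open U"
    unfolding U_def by (intro open_Int open_open_horocone continuous_open_vimage cont)
  moreover have "x \<in> U \<inter> closure C"
    using x y D_eq unfolding U_def C_def \<phi>_def by auto
  ultimately have "x \<in> closure (U \<inter> C)"
    using open_Int_closure_subset by blast
  moreover have "\<phi> ` (U \<inter> C) \<subseteq> C"
    using component_shift_closed[OF _ _ a] unfolding U_def C_def \<phi>_def by auto
  then have "\<phi> ` closure (U \<inter> C) \<subseteq> closure C"
    using closure_subset by (intro image_closure_subset[OF cont(1) closed_closure]) blast
  moreover have "\<phi> x \<in> P"
    using shift_in_posCone[of x a s] square_pos_of_open_horocone[OF _ y] x a c_pos D_eq
    unfolding \<phi>_def by auto
  ultimately show ?thesis
    unfolding D_eq C_def[symmetric] \<phi>_def by auto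
qed

lemma wall_meets_horoball_iff:
  assumes \<alpha>: "\<alpha> > 0" "\<alpha> < 1 / c" and v: "v \<in> V"
  shows "projL ` perp Q P v \<inter> horoball Q P f \<alpha> \<noteq> {} \<longleftrightarrow> B v f = 0"
proof
  assume "projL ` perp Q P v \<inter> horoball Q P f \<alpha> \<noteq> {}"
  then obtain x where x: "x \<in> P" "B x v = 0" "projL x \<in> horoball Q P f \<alpha>"
    unfolding perp_def by auto
  then have "(B x f)^2 \<le> \<alpha> * B x x"
    using horoball_projL_iff[OF x(1)] by simp
  then have "x \<in> open_horocone c"
    using horoball_subset_open_horocone[OF x(1) \<alpha>(2)] by simp
  then show "B v f = 0"
    using open_horocone_avoids_walls[OF _ v x(2)] by simp
next
  assume vf: "B v f = 0"
  obtain g where g: "g \<in> P" "B g v = 0"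
    using posCone_orthogonal_exists v walls_dual unfolding negL_def by blast
  define k where "k = B g f"
  have k: "k > 0"
    unfolding k_def using posCone_bil_isotropic_pos[OF g(1)] .
  define x where "x = 1 *\<^sub>R g + (k / (2 * \<alpha>)) *\<^sub>R f"
  have xx: "B x x = B g g + k^2 / \<alpha>"
    unfolding x_def bil_shift_square k_def[symmetric] using \<alpha>(1) by (simp add: power2_eq_square)
  have "B x x > 0"
    unfolding xx using square_pos_of_posCone[OF g(1)] k \<alpha>(1) by (simp add: add_pos_nonneg)
  then have "x \<in> P"
    using shift_in_posCone[OF g(1) zero_less_one] unfolding x_def by blast
  moreover have "B x f = k"
    unfolding x_def bil_shift_isotropic k_def by simp
  then have "(B x f)^2 \<le> \<alpha> * B x x"
    unfolding xx using \<alpha>(1) square_pos_of_posCone[OF g(1)] by (simp add: field_simps)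
  moreover have "B x v = 0"
    unfolding x_def by (simp add: bil_linear g(2) B_commute[of f v] vf)
  ultimately show "projL ` perp Q P v \<inter> horoball Q P f \<alpha> \<noteq> {}"
    using horoball_projL_iff unfolding perp_def by blast
qed

lemma chamber_meets_horoball_imp_closure:
  assumes \<alpha>: "\<alpha> < 1 / c" and D: "is_chamber Q P V D"
    and meets: "projL ` D \<inter> horoball Q P f \<alpha> \<noteq> {}"
  shows "f \<in> closure D"
proof -
  obtain d where d: "d \<in> D" "projL d \<in> horoball Q P f \<alpha>"
    using meets by auto
  have dP: "d \<in> P"
    using D d(1) unfolding is_chamber_iff by blast
  have dH: "d \<in> open_horocone c"
    using horoball_subset_open_horocone[OF dP \<alpha>] horoball_projL_iff[OF dP] d(2) by simp
  have on_ray: "e *\<^sub>R d + 1 *\<^sub>R f \<in> D" if e: "e > 0" for e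
  proof (rule chamber_shift_closed[OF D d(1) dH e])
    have "c * e * (B d f)^2 < e * B d d"
      using dH e unfolding open_horocone_def by simp
    also have "\<dots> < e * B d d + 2 * 1 * B d f"
      using posCone_bil_isotropic_pos[OF dP] by simp
    finally show "e *\<^sub>R d + 1 *\<^sub>R f \<in> open_horocone c"
      using shift_in_open_horocone_iff[OF e] by blast
  qed
  define x where "x n = inverse (real (Suc n)) *\<^sub>R d + 1 *\<^sub>R f" for n
  have "\<forall>n. x n \<in> D"
    unfolding x_def using on_ray by simp
  moreover have "x \<longlonglongrightarrow> 0 *\<^sub>R d + 1 *\<^sub>R f"
    unfolding x_def by (intro tendsto_intros LIMSEQ_inverse_real_of_nat)
  then have "x \<longlonglongrightarrow> f"
    by simp
  ultimately show ?thesis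
    unfolding closure_sequential by blast
qed

lemma chamber_projL_shift_iff:
  assumes D: "is_chamber Q P V D"
    and y: "y \<in> open_horocone c" and z: "y + s *\<^sub>R f \<in> open_horocone c"
  shows "projL y \<in> projL ` D \<longleftrightarrow> projL (y + s *\<^sub>R f) \<in> projL ` D"
proof -
  have "t *\<^sub>R (y + s *\<^sub>R f) \<in> D \<longleftrightarrow> t *\<^sub>R y \<in> D" if t: "t > 0" for t
  proof -
    have yH: "t *\<^sub>R y \<in> open_horocone c" and zH: "t *\<^sub>R (y + s *\<^sub>R f) \<in> open_horocone c"
      using open_horocone_scaleR_iff[of t] t y z by simp_all
    have zy: "t *\<^sub>R (y + s *\<^sub>R f) = 1 *\<^sub>R (t *\<^sub>R y) + (t * s) *\<^sub>R f"
      and yz: "t *\<^sub>R y = 1 *\<^sub>R (t *\<^sub>R (y + s *\<^sub>R f)) + (- t * s) *\<^sub>R f"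
      by (simp_all add: algebra_simps)
    show ?thesis
    proof
      assume "t *\<^sub>R (y + s *\<^sub>R f) \<in> D"
      from chamber_shift_closed[OF D this zH zero_less_one] yH show "t *\<^sub>R y \<in> D"
        unfolding yz by blast
    next
      assume "t *\<^sub>R y \<in> D"
      from chamber_shift_closed[OF D this yH zero_less_one] zH show "t *\<^sub>R (y + s *\<^sub>R f) \<in> D"
        unfolding zy by blast
    qed
  qed
  then show ?thesis
    unfolding projL_mem_image_iff by blast
qed

lemma chamber_horoball_eq_rho_preimage:
  assumes \<alpha>: "\<alpha> > 0" "\<alpha> < 1 / c" and D: "is_chamber Q P V D"
  shows "projL ` D \<inter> horoball Q P f \<alpha> =
           {p \<in> horoball Q P f \<alpha>. rho_b Q P f \<alpha> p \<in> projL ` D \<inter> horosphere Q P f \<alpha>}"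
proof -
  have "p \<in> projL ` D \<longleftrightarrow> rho_b Q P f \<alpha> p \<in> projL ` D \<inter> horosphere Q P f \<alpha>"
    if p: "p \<in> horoball Q P f \<alpha>" for p
  proof -
    obtain y where y: "y \<in> P" "p = projL y" "(B y f)^2 \<le> \<alpha> * B y y"
      using horoball_elim[OF p] .
    define z where "z = y + horosphere_shift \<alpha> y *\<^sub>R f"
    note z = shift_to_horosphere[OF y(1) \<alpha>(1), folded z_def]
    have "y \<in> open_horocone c" "z \<in> open_horocone c"
      using horoball_subset_open_horocone[OF y(1) \<alpha>(2) y(3)]
        horoball_subset_open_horocone[OF z(1) \<alpha>(2)] z(2) by simp_all
    moreover have "projL z \<in> horosphere Q P f \<alpha>"
      using z horosphere_projL_iff by simp
    ultimately show ?thesis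
      unfolding y(2) rho_b_projL[OF y(1) \<alpha>(1), folded z_def]
      using chamber_projL_shift_iff[OF D] unfolding z_def by simp
  qed
  then show ?thesis
    by blast
qed

end

theorem corollary3p12:
  fixes Q :: "int^'n^'n" and h f :: "real^'n"
    and G :: "(real^'n \<Rightarrow> real^'n) set" and V :: "(real^'n) set"
  assumes L: "even_hyperbolic Q"
    and h: "bil Q h h > 0"
    and G: "finite_index_subgroup G (Oplus Q (posCone Q h))"
    and V: "V \<subseteq> negL Q \<inter> dualL Q"
    and V1: "\<exists>c>0. \<forall>v\<in>V. - bil Q v v < c"
    and V2: "\<forall>g\<in>G. g ` V = V"
    and V3: "\<forall>D. is_chamber Q (posCone Q h) V D \<longrightarrow>
               (\<exists>\<Delta>. finite \<Delta> \<and> defining_set Q (posCone Q h) D \<Delta>)"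
    and V4: "\<forall>D. is_chamber Q (posCone Q h) V D \<longrightarrow>
               (\<forall>x\<in>closure D. x \<noteq> 0 \<and> bil Q x x = 0 \<longrightarrow>
                  (\<exists>t>0. \<exists>l\<in>latL. x = t *\<^sub>R l))"
    and f: "f \<in> closure (posCone Q h) \<inter> latL" "f \<noteq> 0" "bil Q f f = 0"
  shows "\<exists>\<alpha>0>0. \<forall>\<alpha>. 0 < \<alpha> \<and> \<alpha> \<le> \<alpha>0 \<longrightarrow>
     (\<forall>v\<in>V. (projL ` perp Q (posCone Q h) v \<inter> horoball Q (posCone Q h) f \<alpha> \<noteq> {})
              \<longleftrightarrow> bil Q v f = 0) \<and>
     (\<forall>D. is_chamber Q (posCone Q h) V D \<longrightarrow>
        (f \<notin> closure D \<longrightarrow> projL ` D \<inter> horoball Q (posCone Q h) f \<alpha> = {}) \<and>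
        (f \<in> closure D \<longrightarrow> projL ` D \<inter> horoball Q (posCone Q h) f \<alpha> =
           {p \<in> horoball Q (posCone Q h) f \<alpha>.
              rho_b Q (posCone Q h) f \<alpha> p \<in> projL ` D \<inter> horosphere Q (posCone Q h) f \<alpha>}))"
proof -
  \<comment> \<open>Only the symmetry and signature of the form, (V1) and the integrality of \<open>V \<subseteq> L\<^sup>\<vee>\<close>
    against \<open>f \<in> L\<close> are used.\<close>
  obtain c where c: "c > 0" "\<forall>v\<in>V. - bil Q v v < c"
    using V1 by blast
  interpret cusp_walls Q h f V c
    using L h f V c unfolding even_hyperbolic_def by unfold_locales auto
  have small: "\<alpha> < 1 / c" if "\<alpha> \<le> 1 / (2 * c)" for \<alpha>
  proof -
    have "1 / (2 * c) < 1 / c"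
      using c(1) by (simp add: frac_less2)
    then show ?thesis
      using that by linarith
  qed
  show ?thesis
    apply (intro exI[of _ "1 / (2 * c)"] conjI allI impI ballI)
    subgoal
      using c(1) by simp
    subgoal for \<alpha> v
      by (intro wall_meets_horoball_iff) (auto intro: small)
    subgoal for \<alpha> D
      using chamber_meets_horoball_imp_closure[of \<alpha> D] small[of \<alpha>] by auto
    subgoal for \<alpha> D
      by (intro chamber_horoball_eq_rho_preimage) (auto intro: small)
    done
qed

end
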